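(* Let $F$ be a quantifier-free formula and let $\mathbf c$ be a finite set of object constants containing every object constant occurring in $F$. Then the formula $(F\land\mathit{in}_{\mathbf c}(\mathrm{NS}(F)))\rightarrow F^*(\mathbf e_{\mathbf c})$ is logically valid.
   Context: Formulas are first-order formulas with object constants, predicate constants and equality but no function constants of arity $>0$; primitive connectives are $\bot,\land,\lor,\rightarrow$ ($\neg F$ is $F\rightarrow\bot$, $\top$ is $\bot\rightarrow\bot$). Let $\mathbf p=p_1,\dots,p_n$ be the predicate constants occurring in $F$ and $\mathbf u=u_1,\dots,u_n$ predicate variables of matching arities. $F^*(\mathbf u)$ is defined recursively: $p_i(\mathbf t)^*=u_i(\mathbf t)$; $(t_1=t_2)^*=(t_1=t_2)$; $\bot^*=\bot$; $(G\land H)^*=G^*\land H^*$; $(G\lor H)^*=G^*\lor H^*$; $(G\rightarrow H)^*=(G^*\rightarrow H^* )\land(G\rightarrow H)$; $(\forall xG)^*=\forall xG^*$; $(\exists xG)^*=\exists xG^*$. For a finite set $\mathbf c$ of object constants, $\mathit{in}_{\mathbf c}(x_1,\dots,x_m)$ denotes $\bigwedge_{1\le j\le m}\bigvee_{c\in\mathbf c}x_j=c$; for a finite set $V$ of variables, $\mathit{in}_{\mathbf c}(V)$ denotes $\mathit{in}_{\mathbf c}$ applied to the variables of $V$ (the empty conjunction being $\top$). $\mathbf e_{\mathbf c}$ denotes the list of predicate expressions $\lambda\mathbf x(p_i(\mathbf x)\land\mathit{in}_{\mathbf c}(\mathbf x))$, and $F^*(\mathbf e_{\mathbf c})$ is the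 result of replacing each atomic part $u_i(\mathbf t)$ of $F^*(\mathbf u)$ by $p_i(\mathbf t)\land\mathit{in}_{\mathbf c}(\mathbf t)$. Restricted variables: $\mathrm{RV}(G)$ for quantifier-free $G$: if $G$ is an equality between two variables, $\mathrm{RV}(G)=\emptyset$; if $G$ is any other atomic formula, $\mathrm{RV}(G)$ is the set of variables occurring in $G$; $\mathrm{RV}(\bot)=\emptyset$; $\mathrm{RV}(G\land H)=\mathrm{RV}(G)\cup\mathrm{RV}(H)$; $\mathrm{RV}(G\lor H)=\mathrm{RV}(G)\cap\mathrm{RV}(H)$; $\mathrm{RV}(G\rightarrow H)=\emptyset$. An occurrence of a variable in a formula is strictly positive if it is not in the antecedent of any implication. A variable $x$ occurring in a quantifier-free formula $F$ is semi-safe in $F$ if every strictly positive occurrence of $x$ in $F$ belongs to a subformula $G\rightarrow H$ of $F$ with $x\in\mathrm{RV}(G)$. $\mathrm{NS}(F)$ is the set of variables of $F$ that are not semi-safe in $F$. *)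

theory Defs
  imports Main
begin

text \<open>First-order syntax: object variables and object constants are named by
  natural numbers, predicate constants by natural numbers; there are no
  function constants of positive arity.\<close>

datatype trm = Var nat | Cst nat

datatype form =
    Atom nat "trm list"
  | Eq trm trm
  | Bot
  | And form form
  | Or form form
  | Imp form form
  | All nat form
  | Ex nat form

definition Neg :: "form \<Rightarrow> form" where "Neg F = Imp F Bot"
definition Top :: form where "Top = Imp Bot Bot"

fun tvars :: "trm \<Rightarrow> nat set" where
  "tvars (Var x) = {x}" | "tvars (Cst c) = {}"

fun tconsts :: "trm \<Rightarrow> nat set" where
  "tconsts (Var x) = {}" | "tconsts (Cst c) = {c}"

fun qfree :: "form \<Rightarrow> bool" where
  "qfree (Atom p ts) = True"
| "qfree (Eq s t) = True"
| "qfree Bot = True"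
| "qfree (And F G) = (qfree F \<and> qfree G)"
| "qfree (Or F G) = (qfree F \<and> qfree G)"
| "qfree (Imp F G) = (qfree F \<and> qfree G)"
| "qfree (All x F) = False"
| "qfree (Ex x F) = False"

fun vars :: "form \<Rightarrow> nat set" where
  "vars (Atom p ts) = (\<Union>t\<in>set ts. tvars t)"
| "vars (Eq s t) = tvars s \<union> tvars t"
| "vars Bot = {}"
| "vars (And F G) = vars F \<union> vars G"
| "vars (Or F G) = vars F \<union> vars G"
| "vars (Imp F G) = vars F \<union> vars G"
| "vars (All x F) = insert x (vars F)"
| "vars (Ex x F) = insert x (vars F)"

fun oconsts :: "form \<Rightarrow> nat set" where
  "oconsts (Atom p ts) = (\<Union>t\<in>set ts. tconsts t)"
| "oconsts (Eq s t) = tconsts s \<union> tconsts t"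
| "oconsts Bot = {}"
| "oconsts (And F G) = oconsts F \<union> oconsts G"
| "oconsts (Or F G) = oconsts F \<union> oconsts G"
| "oconsts (Imp F G) = oconsts F \<union> oconsts G"
| "oconsts (All x F) = oconsts F"
| "oconsts (Ex x F) = oconsts F"

text \<open>Semantics: the universe is the (nonempty) type 'a; an interpretation
  assigns elements to object constants and relations to predicate constants.\<close>
record 'a interp =
  cst :: "nat \<Rightarrow> 'a"
  prd :: "nat \<Rightarrow> 'a list \<Rightarrow> bool"

fun teval :: "'a interp \<Rightarrow> (nat \<Rightarrow> 'a) \<Rightarrow> trm \<Rightarrow> 'a" where
  "teval I s (Var x) = s x"
| "teval I s (Cst c) = cst I c"

fun sat :: "'a interp \<Rightarrow> (nat \<Rightarrow> 'a) \<Rightarrow> form \<Rightarrow> bool" where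
  "sat I s (Atom p ts) = prd I p (map (teval I s) ts)"
| "sat I s (Eq t u) = (teval I s t = teval I s u)"
| "sat I s Bot = False"
| "sat I s (And F G) = (sat I s F \<and> sat I s G)"
| "sat I s (Or F G) = (sat I s F \<or> sat I s G)"
| "sat I s (Imp F G) = (sat I s F \<longrightarrow> sat I s G)"
| "sat I s (All x F) = (\<forall>a. sat I (s(x := a)) F)"
| "sat I s (Ex x F) = (\<exists>a. sat I (s(x := a)) F)"

text \<open>Logical validity: true in every interpretation (over every universe,
  the universe being the type variable 'a, which is universally quantified in
  any theorem) under every assignment.\<close>
definition valid :: "'a itself \<Rightarrow> form \<Rightarrow> bool" where
  "valid _ F \<longleftrightarrow> (\<forall>(I::'a interp) s. sat I s F)"

fun BigAnd :: "form list \<Rightarrow> form" where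
  "BigAnd [] = Top" | "BigAnd (F # Fs) = And F (BigAnd Fs)"
fun BigOr :: "form list \<Rightarrow> form" where
  "BigOr [] = Bot" | "BigOr (F # Fs) = Or F (BigOr Fs)"

definition in_c :: "nat set \<Rightarrow> trm list \<Rightarrow> form" where
  "in_c c ts = BigAnd (map (\<lambda>t. BigOr (map (\<lambda>d. Eq t (Cst d)) (sorted_list_of_set c))) ts)"

definition in_c_vars :: "nat set \<Rightarrow> nat set \<Rightarrow> form" where
  "in_c_vars c V = in_c c (map Var (sorted_list_of_set V))"

text \<open>F^*(u) with the predicate variables u already replaced by predicate
  expressions: R p ts is the formula substituted for the atom u_p(ts).\<close>
fun star :: "(nat \<Rightarrow> trm list \<Rightarrow> form) \<Rightarrow> form \<Rightarrow> form" where
  "star R (Atom p ts) = R p ts"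
| "star R (Eq s t) = Eq s t"
| "star R Bot = Bot"
| "star R (And F G) = And (star R F) (star R G)"
| "star R (Or F G) = Or (star R F) (star R G)"
| "star R (Imp F G) = And (Imp (star R F) (star R G)) (Imp F G)"
| "star R (All x F) = All x (star R F)"
| "star R (Ex x F) = Ex x (star R F)"

definition e_c :: "nat set \<Rightarrow> nat \<Rightarrow> trm list \<Rightarrow> form" where
  "e_c c p ts = And (Atom p ts) (in_c c ts)"

text \<open>Restricted variables (only meaningful for quantifier-free formulas).\<close>
fun RV :: "form \<Rightarrow> nat set" where
  "RV (Atom p ts) = (\<Union>t\<in>set ts. tvars t)"
| "RV (Eq s t) = (case (s, t) of (Var _, Var _) \<Rightarrow> {} | _ \<Rightarrow> tvars s \<union> tvars t)"
| "RV Bot = {}"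
| "RV (And F G) = RV F \<union> RV G"
| "RV (Or F G) = RV F \<inter> RV G"
| "RV (Imp F G) = {}"
| "RV (All x F) = {}"
| "RV (Ex x F) = {}"

text \<open>covered x F: every strictly positive occurrence of x in F belongs to a
  subformula G \<longrightarrow> H of F with x \<in> RV(G).\<close>
fun covered :: "nat \<Rightarrow> form \<Rightarrow> bool" where
  "covered x (Atom p ts) = (x \<notin> (\<Union>t\<in>set ts. tvars t))"
| "covered x (Eq s t) = (x \<notin> tvars s \<union> tvars t)"
| "covered x Bot = True"
| "covered x (And F G) = (covered x F \<and> covered x G)"
| "covered x (Or F G) = (covered x F \<and> covered x G)"
| "covered x (Imp G H) = (x \<in> RV G \<or> covered x H)"
| "covered x (All y F) = covered x F"
| "covered x (Ex y F) = covered x F"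

definition semi_safe :: "nat \<Rightarrow> form \<Rightarrow> bool" where
  "semi_safe x F \<longleftrightarrow> x \<in> vars F \<and> covered x F"

definition NS :: "form \<Rightarrow> nat set" where
  "NS F = {x \<in> vars F. \<not> semi_safe x F}"

end

theory Submission
  imports Defs
begin

text \<open>
  Write \<open>G\<^sup>*\<close> for \<open>star (e_c c) G\<close>. By induction on \<open>F\<close> one shows that \<open>F\<close> implies \<open>F\<^sup>*\<close>
  under any assignment that maps the variables of \<open>NS F\<close> to values of constants
  in \<open>c\<close>. The only non-trivial case is an implication \<open>G \<longrightarrow> H\<close>: if \<open>G\<^sup>*\<close> holds
  then so does \<open>G\<close>, hence \<open>H\<close>, and moreover every variable of \<open>RV G\<close> denotes a
  constant of \<open>c\<close>; since \<open>NS H \<subseteq> RV G \<union> NS (G \<longrightarrow> H)\<close>, the induction hypothesis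
  yields \<open>H\<^sup>*\<close>.
\<close>

lemma finite_tvars [simp]: "finite (tvars t)"
  by (cases t) auto

lemma mem_tvars_iff [simp]: "x \<in> tvars t \<longleftrightarrow> t = Var x"
  by (cases t) auto

lemma finite_vars [simp]: "finite (vars F)"
  by (induction F) auto

lemma sat_BigAnd: "sat I s (BigAnd Fs) \<longleftrightarrow> (\<forall>F\<in>set Fs. sat I s F)"
  by (induction Fs) (auto simp: Top_def)

lemma sat_BigOr: "sat I s (BigOr Fs) \<longleftrightarrow> (\<exists>F\<in>set Fs. sat I s F)"
  by (induction Fs) auto

lemma sat_in_c:
  assumes "finite c"
  shows "sat I s (in_c c ts) \<longleftrightarrow> teval I s ` set ts \<subseteq> cst I ` c"
  using assms by (auto simp: in_c_def sat_BigAnd sat_BigOr)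

lemma sat_in_c_vars:
  assumes "finite c" and "finite V"
  shows "sat I s (in_c_vars c V) \<longleftrightarrow> s ` V \<subseteq> cst I ` c"
  using assms by (auto simp: in_c_vars_def sat_in_c image_image)

lemma NS_eq: "NS F = {x \<in> vars F. \<not> covered x F}"
  by (auto simp: NS_def semi_safe_def)

lemma NS_Imp_consequent: "NS H \<subseteq> RV G \<union> NS (Imp G H)"
  by (auto simp: NS_eq)

lemma sat_star_e_c_imp_sat: "sat I s (star (e_c c) F) \<Longrightarrow> sat I s F"
  by (induction F arbitrary: s) (auto simp: e_c_def)

lemma sat_star_e_c_RV:
  assumes "finite c" and "oconsts F \<subseteq> c"
    and "sat I s (star (e_c c) F)" and "x \<in> RV F"
  shows "s x \<in> cst I ` c"
  using assms
proof (induction F)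
  case (Atom p ts)
  then have "Var x \<in> set ts"
    by simp
  with Atom.prems show ?case
    by (force simp: e_c_def sat_in_c)
next
  case (Eq t u)
  then show ?case
    by (cases t; cases u) (auto intro: rev_image_eqI)
qed auto

lemma sat_star_e_c:
  assumes "qfree F" and "finite c" and "oconsts F \<subseteq> c"
    and "sat I s F" and "s ` NS F \<subseteq> cst I ` c"
  shows "sat I s (star (e_c c) F)"
  using assms
proof (induction F)
  case (Atom p ts)
  have "teval I s t \<in> cst I ` c" if "t \<in> set ts" for t
    using Atom.prems that by (cases t) (force simp: NS_eq)+
  with Atom.prems show ?case
    by (auto simp: e_c_def sat_in_c)
next
  case (And F G)
  then show ?case
    by (auto simp: NS_eq)
next
  case (Or F G)
  then show ?case
    by (auto simp: NS_eq)
next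
  case (Imp G H)
  have "sat I s (star (e_c c) H)" if G_star: "sat I s (star (e_c c) G)"
  proof -
    have "sat I s H"
      using Imp.prems G_star by (auto dest: sat_star_e_c_imp_sat)
    moreover have "s ` RV G \<subseteq> cst I ` c"
      using Imp.prems G_star by (auto intro: sat_star_e_c_RV)
    then have "s ` NS H \<subseteq> cst I ` c"
      using Imp.prems NS_Imp_consequent[of H G] by blast
    ultimately show ?thesis
      using Imp.IH(2) Imp.prems by simp
  qed
  with Imp.prems show ?case
    by simp
qed auto

theorem lemma3:
  fixes F :: form and c :: "nat set"
  assumes "qfree F"
    and "finite c"
    and "oconsts F \<subseteq> c"
  shows "valid TYPE('a) (Imp (And F (in_c_vars c (NS F))) (star (e_c c) F))"
proof -
  have "finite (NS F)"
    by (simp add: NS_def)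
  then show ?thesis
    using assms sat_star_e_c by (auto simp: valid_def sat_in_c_vars)
qed

end
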